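(* Let $Y$ be a normal solid vector space and $(X,d)$ a cone metric space over $Y$. Then for a sequence $(x_n)$ in $X$ and $x\in X$: $x_n\to x$ in $X$ if and only if $d(x_n,x)\to0$ in $Y$.
   Context: Vector space with convergence: a real vector space $Y$ with a relation $\to$ between sequences in $Y$ and points of $Y$ (uniqueness of limits not assumed) such that (C1) $x_n\to x$, $y_n\to y$ imply $x_n+y_n\to x+y$; (C2) $x_n\to x$, $\lambda\in\mathbb R$ imply $\lambda x_n\to\lambda x$; (C3) $\lambda_n\to\lambda$ in $\mathbb R$ imply $\lambda_n x\to\lambda x$. $A\subseteq Y$ is open if $x_n\to x\in A$ implies $x_n\in A$ for all but finitely many $n$; closed if $x_n\to x$, $x_n\in A$ $\forall n$ imply $x\in A$; $A^\circ$ is the union of all open subsets of $A$. A cone is a nonempty closed $K$ with $\lambda K\subseteq K$ ($\lambda\ge0$), $K+K\subseteq K$, $K\cap(-K)=\{0\}$; solid if $K\ne\{0\}$, $K^\circ\ne\emptyset$. A vector ordering is a partial order $\preceq$ with (V1) $x\preceq y\Rightarrow x+z\preceq y+z$; (V2) $\lambda\ge0$, $x\preceq y\Rightarrow\lambda x\preceq\lambda y$; (V3) $x_n\to x$, $y_n\to y$, $x_n\preceq y_n$ $\forall n\Rightarrow x\preceq y$. Solid vector space: positive cone $K=\{x:x\succeq0\}$ solid, with $x\prec y$ iff $y-x\in K^\circ$. Normal: whenever $x_n\preceq y_n\preceq z_n$ for all $n$, $x_n\to x$, $z_n\to x$, then $y_n\to x$. Cone metric space over $Y$: nonempty $X$ with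 $d\colon X\times X\to Y$, $d(x,y)\succeq0$, $d(x,y)=0$ iff $x=y$, $d(x,y)=d(y,x)$, $d(x,y)\preceq d(x,z)+d(z,y)$. Convergence in $X$: $x_n\to x$ iff for every $c\succ0$, $d(x_n,x)\prec c$ for all but finitely many $n$. *)

theory Defs
  imports Complex_Main
begin

type_synonym 'y convergence = "(nat \<Rightarrow> 'y) \<Rightarrow> 'y \<Rightarrow> bool"

text \<open>Vector space with convergence: axioms (C1)-(C3); uniqueness of limits not assumed.\<close>
definition vs_conv :: "('y::real_vector) convergence \<Rightarrow> bool" where
  "vs_conv conv \<longleftrightarrow>
     (\<forall>xs x ys y. conv xs x \<longrightarrow> conv ys y \<longrightarrow> conv (\<lambda>n. xs n + ys n) (x + y)) \<and>
     (\<forall>xs x (r::real). conv xs x \<longrightarrow> conv (\<lambda>n. r *\<^sub>R xs n) (r *\<^sub>R x)) \<and>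
     (\<forall>(ls::nat \<Rightarrow> real) l x. ls \<longlonglongrightarrow> l \<longrightarrow> conv (\<lambda>n. ls n *\<^sub>R x) (l *\<^sub>R x))"

definition open_conv :: "'y convergence \<Rightarrow> 'y set \<Rightarrow> bool" where
  "open_conv conv A \<longleftrightarrow>
     (\<forall>xs x. conv xs x \<longrightarrow> x \<in> A \<longrightarrow> (\<forall>\<^sub>F n in sequentially. xs n \<in> A))"

definition closed_conv :: "'y convergence \<Rightarrow> 'y set \<Rightarrow> bool" where
  "closed_conv conv A \<longleftrightarrow> (\<forall>xs x. conv xs x \<longrightarrow> (\<forall>n. xs n \<in> A) \<longrightarrow> x \<in> A)"

definition interior_conv :: "'y convergence \<Rightarrow> 'y set \<Rightarrow> 'y set" where
  "interior_conv conv A = \<Union>{U. U \<subseteq> A \<and> open_conv conv U}"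

definition is_cone :: "('y::real_vector) convergence \<Rightarrow> 'y set \<Rightarrow> bool" where
  "is_cone conv K \<longleftrightarrow> K \<noteq> {} \<and> closed_conv conv K \<and>
     (\<forall>r::real. \<forall>x\<in>K. r \<ge> 0 \<longrightarrow> r *\<^sub>R x \<in> K) \<and>
     (\<forall>x\<in>K. \<forall>y\<in>K. x + y \<in> K) \<and> K \<inter> uminus ` K = {0}"

definition vector_ordering :: "('y::real_vector) convergence \<Rightarrow> ('y \<Rightarrow> 'y \<Rightarrow> bool) \<Rightarrow> bool" where
  "vector_ordering conv le \<longleftrightarrow>
     (\<forall>x. le x x) \<and> (\<forall>x y z. le x y \<longrightarrow> le y z \<longrightarrow> le x z) \<and>
     (\<forall>x y. le x y \<longrightarrow> le y x \<longrightarrow> x = y) \<and>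
     (\<forall>x y z. le x y \<longrightarrow> le (x + z) (y + z)) \<and>
     (\<forall>(r::real) x y. r \<ge> 0 \<longrightarrow> le x y \<longrightarrow> le (r *\<^sub>R x) (r *\<^sub>R y)) \<and>
     (\<forall>xs x ys y. conv xs x \<longrightarrow> conv ys y \<longrightarrow> (\<forall>n. le (xs n) (ys n)) \<longrightarrow> le x y)"

definition pos_cone :: "('y::real_vector \<Rightarrow> 'y \<Rightarrow> bool) \<Rightarrow> 'y set" where
  "pos_cone le = {x. le 0 x}"

definition solid_vs :: "('y::real_vector) convergence \<Rightarrow> ('y \<Rightarrow> 'y \<Rightarrow> bool) \<Rightarrow> bool" where
  "solid_vs conv le \<longleftrightarrow> vs_conv conv \<and> vector_ordering conv le \<and>
     is_cone conv (pos_cone le) \<and> pos_cone le \<noteq> {0} \<and> interior_conv conv (pos_cone le) \<noteq> {}"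

definition strict_le :: "('y::real_vector) convergence \<Rightarrow> ('y \<Rightarrow> 'y \<Rightarrow> bool) \<Rightarrow> 'y \<Rightarrow> 'y \<Rightarrow> bool" where
  "strict_le conv le x y \<longleftrightarrow> y - x \<in> interior_conv conv (pos_cone le)"

definition normal_vs :: "('y::real_vector) convergence \<Rightarrow> ('y \<Rightarrow> 'y \<Rightarrow> bool) \<Rightarrow> bool" where
  "normal_vs conv le \<longleftrightarrow>
     (\<forall>xs ys zs x. (\<forall>n. le (xs n) (ys n) \<and> le (ys n) (zs n)) \<longrightarrow> conv xs x \<longrightarrow> conv zs x
        \<longrightarrow> conv ys x)"

definition cone_metric :: "('y::real_vector \<Rightarrow> 'y \<Rightarrow> bool) \<Rightarrow> ('x \<Rightarrow> 'x \<Rightarrow> 'y) \<Rightarrow> bool" where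
  "cone_metric le d \<longleftrightarrow>
     (\<forall>x y. le 0 (d x y)) \<and> (\<forall>x y. d x y = 0 \<longleftrightarrow> x = y) \<and> (\<forall>x y. d x y = d y x) \<and>
     (\<forall>x y z. le (d x y) (d x z + d z y))"

definition cm_conv :: "('y::real_vector) convergence \<Rightarrow> ('y \<Rightarrow> 'y \<Rightarrow> bool) \<Rightarrow> ('x \<Rightarrow> 'x \<Rightarrow> 'y)
     \<Rightarrow> (nat \<Rightarrow> 'x) \<Rightarrow> 'x \<Rightarrow> bool" where
  "cm_conv conv le d xs x \<longleftrightarrow>
     (\<forall>c. strict_le conv le 0 c \<longrightarrow> (\<forall>\<^sub>F n in sequentially. strict_le conv le (d (xs n) x) c))"

end

theory Submission
  imports Defs
begin

text \<open>Fix a point c of the interior of the positive cone. Every interior point is an order unit,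
  and the multiples r c with r > 0 are again interior, so convergence in X means: for each r > 0,
  eventually d(x_n, x) \<preceq> r c. Taking the infimum e_n of the admissible r yields a real null
  sequence \<delta>_n with 0 \<preceq> d(x_n, x) \<preceq> \<delta>_n c, and normality gives d(x_n, x) \<rightarrow> 0.
  Conversely, if d(x_n, x) \<rightarrow> 0 then c - d(x_n, x) \<rightarrow> c, so it eventually lies in the open
  interior.\<close>

lemma vs_conv_add: "vs_conv conv \<Longrightarrow> conv xs x \<Longrightarrow> conv ys y \<Longrightarrow> conv (\<lambda>n. xs n + ys n) (x + y)"
  unfolding vs_conv_def by blast

lemma vs_conv_scaleR: "vs_conv conv \<Longrightarrow> conv xs x \<Longrightarrow> conv (\<lambda>n. r *\<^sub>R xs n) (r *\<^sub>R x)"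
  unfolding vs_conv_def by blast

lemma vs_conv_scaleR_left: "vs_conv conv \<Longrightarrow> ls \<longlonglongrightarrow> l \<Longrightarrow> conv (\<lambda>n. ls n *\<^sub>R x) (l *\<^sub>R x)"
  unfolding vs_conv_def by blast

lemma vs_conv_const:
  assumes "vs_conv conv"
  shows "conv (\<lambda>n. c) c"
  using vs_conv_scaleR_left[OF assms tendsto_const, of 1 c] by simp

lemma vs_conv_diff_const:
  assumes "vs_conv conv" and "conv ys 0"
  shows "conv (\<lambda>n. c - ys n) c"
  using vs_conv_add[OF assms(1) vs_conv_const[OF assms(1)] vs_conv_scaleR[OF assms, of "-1"], of c]
  by simp

lemma interior_conv_iff:
  "c \<in> interior_conv conv A \<longleftrightarrow> (\<exists>U. U \<subseteq> A \<and> open_conv conv U \<and> c \<in> U)"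
  unfolding interior_conv_def by blast

lemma interior_conv_subset: "interior_conv conv A \<subseteq> A"
  unfolding interior_conv_def by blast

lemma open_conv_interior_conv: "open_conv conv (interior_conv conv A)"
  unfolding open_conv_def
proof (intro allI impI)
  fix ys y assume lim: "conv ys y" and "y \<in> interior_conv conv A"
  then obtain U where U: "U \<subseteq> A" "open_conv conv U" "y \<in> U"
    unfolding interior_conv_iff by blast
  have "U \<subseteq> interior_conv conv A"
    using U(1,2) unfolding interior_conv_def by blast
  moreover have "\<forall>\<^sub>F n in sequentially. ys n \<in> U"
    using U(2,3) lim unfolding open_conv_def by blast
  ultimately show "\<forall>\<^sub>F n in sequentially. ys n \<in> interior_conv conv A"
    by (auto elim: eventually_mono)
qed

lemma eventually_in_interior_conv:
  assumes "conv ys y" and "y \<in> interior_conv conv A"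
  shows "\<forall>\<^sub>F n in sequentially. ys n \<in> interior_conv conv A"
  using open_conv_interior_conv[of conv A, unfolded open_conv_def, rule_format, OF assms] .

lemma open_conv_scaleR:
  assumes "vs_conv conv" and "open_conv conv U" and "r \<noteq> 0"
  shows "open_conv conv ((\<lambda>u. r *\<^sub>R u) ` U)"
  unfolding open_conv_def
proof (intro allI impI)
  fix ys y assume ys: "conv ys y" and "y \<in> (\<lambda>u. r *\<^sub>R u) ` U"
  then obtain u where u: "u \<in> U" "y = r *\<^sub>R u" by auto
  have "conv (\<lambda>n. inverse r *\<^sub>R ys n) u"
    using vs_conv_scaleR[OF assms(1) ys, of "inverse r"] u assms(3) by simp
  then have "\<forall>\<^sub>F n in sequentially. inverse r *\<^sub>R ys n \<in> U"
    using assms(2) u(1) unfolding open_conv_def by simp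
  then show "\<forall>\<^sub>F n in sequentially. ys n \<in> (\<lambda>u. r *\<^sub>R u) ` U"
  proof (rule eventually_mono)
    fix n assume "inverse r *\<^sub>R ys n \<in> U"
    moreover have "ys n = r *\<^sub>R (inverse r *\<^sub>R ys n)"
      using assms(3) by simp
    ultimately show "ys n \<in> (\<lambda>u. r *\<^sub>R u) ` U"
      by blast
  qed
qed

lemma interior_conv_scaleR:
  assumes "vs_conv conv" and "\<And>x. x \<in> A \<Longrightarrow> r *\<^sub>R x \<in> A"
    and "c \<in> interior_conv conv A" and "r \<noteq> 0"
  shows "r *\<^sub>R c \<in> interior_conv conv A"
proof -
  obtain U where U: "U \<subseteq> A" "open_conv conv U" "c \<in> U"
    using assms(3) interior_conv_iff by metis
  have "(\<lambda>u. r *\<^sub>R u) ` U \<subseteq> A"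
    using U(1) assms(2) by auto
  with open_conv_scaleR[OF assms(1) U(2) assms(4)] U(3) show ?thesis
    unfolding interior_conv_iff by (intro exI[of _ "(\<lambda>u. r *\<^sub>R u) ` U"]) auto
qed

lemma
  assumes "vector_ordering conv le"
  shows vector_ordering_trans: "le x y \<Longrightarrow> le y z \<Longrightarrow> le x z"
    and vector_ordering_add_right_mono: "le x y \<Longrightarrow> le (x + z) (y + z)"
    and vector_ordering_scaleR_left_mono: "0 \<le> r \<Longrightarrow> le x y \<Longrightarrow> le (r *\<^sub>R x) (r *\<^sub>R y)"
  using assms unfolding vector_ordering_def by simp_all

lemma vector_ordering_le_iff_diff_nonneg:
  assumes "vector_ordering conv le"
  shows "le x y \<longleftrightarrow> le 0 (y - x)"
  using vector_ordering_add_right_mono[OF assms, of x y "- x"]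
    vector_ordering_add_right_mono[OF assms, of 0 "y - x" x]
  by auto

lemma vector_ordering_scaleR_right_mono:
  assumes "vector_ordering conv le" and "le 0 c" and "s \<le> t"
  shows "le (s *\<^sub>R c) (t *\<^sub>R c)"
  using vector_ordering_scaleR_left_mono[OF assms(1), of "t - s" 0 c] assms(2,3)
  by (simp add: vector_ordering_le_iff_diff_nonneg[OF assms(1), of "s *\<^sub>R c"] scaleR_diff_left)

lemma strict_le_imp_le:
  assumes "vector_ordering conv le" and "strict_le conv le x y"
  shows "le x y"
proof -
  have "y - x \<in> pos_cone le"
    using assms(2) interior_conv_subset[of conv "pos_cone le"] unfolding strict_le_def by blast
  then show ?thesis
    unfolding pos_cone_def by (simp add: vector_ordering_le_iff_diff_nonneg[OF assms(1), of x y])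
qed

lemma interior_pos_cone_absorbing:
  assumes "vs_conv conv" and "vector_ordering conv le"
    and "c \<in> interior_conv conv (pos_cone le)"
  shows "\<exists>t>0. le y (t *\<^sub>R c)"
proof -
  have "conv (\<lambda>m. inverse (real (Suc m)) *\<^sub>R y) 0"
    using vs_conv_scaleR_left[OF assms(1) LIMSEQ_inverse_real_of_nat, of y] by simp
  then have "conv (\<lambda>m. c - inverse (real (Suc m)) *\<^sub>R y) c"
    by (rule vs_conv_diff_const[OF assms(1)])
  then have "\<forall>\<^sub>F m in sequentially. c - inverse (real (Suc m)) *\<^sub>R y \<in> interior_conv conv (pos_cone le)"
    by (rule eventually_in_interior_conv[OF _ assms(3)])
  then obtain m where "c - inverse (real (Suc m)) *\<^sub>R y \<in> interior_conv conv (pos_cone le)"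
    unfolding eventually_sequentially by blast
  then have "le 0 (c - inverse (real (Suc m)) *\<^sub>R y)"
    using interior_conv_subset[of conv "pos_cone le"] unfolding pos_cone_def by blast
  then have "le 0 (real (Suc m) *\<^sub>R (c - inverse (real (Suc m)) *\<^sub>R y))"
    using vector_ordering_scaleR_left_mono[OF assms(2), of "real (Suc m)" 0] by simp
  then have "le 0 (real (Suc m) *\<^sub>R c - y)"
    by (simp add: scaleR_diff_right del: of_nat_Suc)
  then have "le y (real (Suc m) *\<^sub>R c)"
    by (simp add: vector_ordering_le_iff_diff_nonneg[OF assms(2), of y])
  then show ?thesis
    by (intro exI[of _ "real (Suc m)"]) simp
qed

text \<open>The bound is needed for every n, not just eventually: convergence is not assumed to be
  insensitive to finitely many terms, hence the hypothesis \<open>unit\<close>. The infimum of the admissible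
  t turns the family of eventual bounds into a single sequence.\<close>

lemma null_majorant_by_order_unit:
  assumes vo: "vector_ordering conv le" and c: "le 0 c"
    and unit: "\<And>n. \<exists>t>0. le (ys n) (t *\<^sub>R c)"
    and small: "\<And>r. r > 0 \<Longrightarrow> \<forall>\<^sub>F n in sequentially. le (ys n) (r *\<^sub>R c)"
  obtains \<delta> :: "nat \<Rightarrow> real" where "\<delta> \<longlonglongrightarrow> 0" and "\<And>n. le (ys n) (\<delta> n *\<^sub>R c)"
proof -
  define T where "T n = {t::real. t > 0 \<and> le (ys n) (t *\<^sub>R c)}" for n
  define e where "e n = Inf (T n)" for n
  have T_ne: "T n \<noteq> {}" for n
    using unit unfolding T_def by blast
  have T_bdd: "bdd_below (T n)" for n
    unfolding T_def by (auto intro: bdd_belowI[of _ 0])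
  have e_nonneg: "0 \<le> e n" for n
    unfolding e_def by (rule cInf_greatest[OF T_ne]) (auto simp: T_def)
  have above_e: "le (ys n) (s *\<^sub>R c)" if "e n < s" for n s
  proof -
    obtain t where "t \<in> T n" "t < s"
      using cInf_lessD[OF T_ne \<open>e n < s\<close>[unfolded e_def]] by blast
    then show ?thesis
      unfolding T_def
      using vector_ordering_trans[OF vo] vector_ordering_scaleR_right_mono[OF vo c, of t s]
      by auto
  qed
  have "e \<longlonglongrightarrow> 0"
  proof (rule order_tendstoI)
    fix a :: real assume "a < 0"
    then show "\<forall>\<^sub>F n in sequentially. a < e n"
      using e_nonneg by (simp add: less_le_trans)
  next
    fix a :: real assume "0 < a"
    then have "\<forall>\<^sub>F n in sequentially. a / 2 \<in> T n"
      using small[of "a / 2"] by (simp add: T_def)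
    then show "\<forall>\<^sub>F n in sequentially. e n < a"
      by eventually_elim
        (use \<open>0 < a\<close> in \<open>auto simp: e_def intro: le_less_trans[OF cInf_lower[OF _ T_bdd]]\<close>)
  qed
  then have "(\<lambda>n. e n + inverse (real (Suc n))) \<longlonglongrightarrow> 0"
    using tendsto_add[OF _ LIMSEQ_inverse_real_of_nat] by fastforce
  moreover have "le (ys n) ((e n + inverse (real (Suc n))) *\<^sub>R c)" for n
    by (rule above_e) simp
  ultimately show ?thesis
    by (rule that)
qed

lemma cm_conv_imp_conv_dist:
  assumes solid: "solid_vs conv le" and normal: "normal_vs conv le" and d: "cone_metric le d"
    and lim: "cm_conv conv le d xs x"
  shows "conv (\<lambda>n. d (xs n) x) 0"
proof -
  have vs: "vs_conv conv" and vo: "vector_ordering conv le"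
    and cone: "is_cone conv (pos_cone le)"
    using solid unfolding solid_vs_def by simp_all
  obtain c where c: "c \<in> interior_conv conv (pos_cone le)"
    using solid unfolding solid_vs_def by auto
  have c_nonneg: "le 0 c"
    using c interior_conv_subset[of conv "pos_cone le"] unfolding pos_cone_def by blast
  have pos_scaleR: "r *\<^sub>R y \<in> pos_cone le" if "0 \<le> r" "y \<in> pos_cone le" for r y
    using cone that unfolding is_cone_def by simp
  have small: "\<forall>\<^sub>F n in sequentially. le (d (xs n) x) (r *\<^sub>R c)" if "r > 0" for r
  proof -
    have "r *\<^sub>R c \<in> interior_conv conv (pos_cone le)"
      using interior_conv_scaleR[OF vs pos_scaleR c] \<open>r > 0\<close> by simp
    then have "\<forall>\<^sub>F n in sequentially. strict_le conv le (d (xs n) x) (r *\<^sub>R c)"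
      using lim unfolding cm_conv_def strict_le_def by simp
    then show ?thesis
      by (rule eventually_mono) (rule strict_le_imp_le[OF vo])
  qed
  obtain \<delta> where "\<delta> \<longlonglongrightarrow> 0" and upper: "\<And>n. le (d (xs n) x) (\<delta> n *\<^sub>R c)"
    using null_majorant_by_order_unit[where ys = "\<lambda>n. d (xs n) x",
        OF vo c_nonneg interior_pos_cone_absorbing[OF vs vo c] small] by blast
  then have "conv (\<lambda>n. \<delta> n *\<^sub>R c) 0"
    using vs_conv_scaleR_left[OF vs, of \<delta> 0 c] by simp
  moreover have "le 0 (d (xs n) x)" for n
    using d unfolding cone_metric_def by simp
  ultimately show ?thesis
    using normal[unfolded normal_vs_def, rule_format, of "\<lambda>_. 0" "\<lambda>n. d (xs n) x" "\<lambda>n. \<delta> n *\<^sub>R c" 0]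
      vs_conv_const[OF vs, of 0] upper
    by blast
qed

lemma conv_dist_imp_cm_conv:
  assumes "vs_conv conv" and "conv (\<lambda>n. d (xs n) x) 0"
  shows "cm_conv conv le d xs x"
  unfolding cm_conv_def strict_le_def
proof (intro allI impI)
  fix c assume "c - 0 \<in> interior_conv conv (pos_cone le)"
  then have "c \<in> interior_conv conv (pos_cone le)"
    by simp
  with vs_conv_diff_const[OF assms]
  show "\<forall>\<^sub>F n in sequentially. c - d (xs n) x \<in> interior_conv conv (pos_cone le)"
    by (rule eventually_in_interior_conv)
qed

theorem theorem9p18:
  fixes conv :: "('y::real_vector) convergence" and le :: "'y \<Rightarrow> 'y \<Rightarrow> bool"
    and d :: "'x \<Rightarrow> 'x \<Rightarrow> 'y" and xs :: "nat \<Rightarrow> 'x" and x :: 'x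
  assumes "solid_vs conv le" and "normal_vs conv le" and "cone_metric le d"
  shows "cm_conv conv le d xs x \<longleftrightarrow> conv (\<lambda>n. d (xs n) x) 0"
proof
  assume "cm_conv conv le d xs x"
  then show "conv (\<lambda>n. d (xs n) x) 0"
    by (rule cm_conv_imp_conv_dist[OF assms])
next
  have "vs_conv conv"
    using assms(1) unfolding solid_vs_def by simp
  moreover assume "conv (\<lambda>n. d (xs n) x) 0"
  ultimately show "cm_conv conv le d xs x"
    by (rule conv_dist_imp_cm_conv)
qed

end
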